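(* There is no polynomial $p(a,y,z)\in\mathbb{C}[a,y,z]$ such that for all $(y,z)\in\mathbb{C}^2$: $(y=0\wedge z=0)\iff(\exists a\in\mathbb{C})\,p(a,y,z)=0$. *)

theory Defs
  imports Complex_Main "HOL-Computational_Algebra.Polynomial"
begin

text \<open>A trivariate polynomial p(a,y,z) over the complex numbers is represented as a
nested univariate polynomial: C[a,y,z] = C[z][y][a]. The outermost variable is a,
the middle one y, the innermost one z.\<close>

definition eval3 :: "complex poly poly poly \<Rightarrow> complex \<Rightarrow> complex \<Rightarrow> complex \<Rightarrow> complex" where
  "eval3 p a y z = poly (poly (poly p [:[:a:]:]) [:y:]) z"

end

theory Submission
  imports Defs "HOL-Computational_Algebra.Fundamental_Theorem_Algebra"
begin

text \<open>If p vanished exactly on the line y = z = 0, then for every y \<noteq> 0 the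
univariate polynomials a \<mapsto> p(a,y,z) and z \<mapsto> p(a,y,z) would have no complex roots,
hence be constant by the fundamental theorem of algebra. So off the plane y = 0 the
value p(a,y,z) depends on y alone, and since a polynomial in y is determined by its
values at y \<noteq> 0, the same holds on the plane y = 0. But then p(a,0,0) = p(0,0,1) for
all a, although the left side vanishes for some a and the right side does not.\<close>

lemma poly_const_if_no_roots:
  fixes f :: "complex poly"
  assumes "\<And>x. poly f x \<noteq> 0"
  shows "poly f x = poly f w"
  using fundamental_theorem_of_algebra[of f] assms unfolding constant_def by blast

lemma poly_eq_if_eq_off_point:
  fixes f g :: "'a::{idom, ring_char_0} poly"
  assumes "\<And>x. x \<noteq> c \<Longrightarrow> poly f x = poly g x"
  shows "f = g"
proof (rule ccontr)
  assume "f \<noteq> g"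
  then have "finite {x. poly (f - g) x = 0}"
    by (intro poly_roots_finite) simp
  moreover have "UNIV - {c} \<subseteq> {x. poly (f - g) x = 0}"
    using assms by auto
  ultimately have "finite (UNIV - {c})"
    by (rule finite_subset[rotated])
  then show False
    using infinite_UNIV_char_0[where 'a='a] by simp
qed

lemma eval3_as_poly_in_a:
  "eval3 p a y z = poly (map_poly (\<lambda>c. poly (poly c [:y:]) z) p) a"
  unfolding eval3_def by (induction p) (simp_all add: map_poly_pCons)

lemma eval3_as_poly_in_y:
  "eval3 p a y z = poly (map_poly (\<lambda>q. poly q z) (poly p [:[:a:]:])) y"
proof -
  have "poly (poly c [:y:]) z = poly (map_poly (\<lambda>q. poly q z) c) y" for c :: "complex poly poly"
    by (induction c) (simp_all add: map_poly_pCons)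
  then show ?thesis
    unfolding eval3_def .
qed

lemma eval3_depends_only_on_y:
  assumes no_roots: "\<And>a y z. y \<noteq> 0 \<Longrightarrow> eval3 p a y z \<noteq> 0"
  shows "eval3 p a y z = eval3 p a' y z'"
proof -
  have off_plane: "eval3 p a y z = eval3 p a' y z'" if "y \<noteq> 0" for a a' y z z'
  proof -
    have "eval3 p a y z = eval3 p a' y z"
      using poly_const_if_no_roots no_roots[OF that] by (metis eval3_as_poly_in_a)
    also have "\<dots> = eval3 p a' y z'"
      using poly_const_if_no_roots no_roots[OF that] by (metis eval3_def)
    finally show ?thesis .
  qed
  have "map_poly (\<lambda>q. poly q z) (poly p [:[:a:]:]) = map_poly (\<lambda>q. poly q z') (poly p [:[:a':]:])"
    by (rule poly_eq_if_eq_off_point[of 0]) (simp add: eval3_as_poly_in_y[symmetric] off_plane)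
  then show ?thesis
    by (metis eval3_as_poly_in_y)
qed

theorem corollary6p4:
  shows "\<not> (\<exists>p :: complex poly poly poly.
            \<forall>y z :: complex. (y = 0 \<and> z = 0) \<longleftrightarrow> (\<exists>a :: complex. eval3 p a y z = 0))"
proof
  assume "\<exists>p :: complex poly poly poly.
            \<forall>y z :: complex. (y = 0 \<and> z = 0) \<longleftrightarrow> (\<exists>a :: complex. eval3 p a y z = 0)"
  then obtain p :: "complex poly poly poly" where
    zeros: "\<And>y z. (y = 0 \<and> z = 0) \<longleftrightarrow> (\<exists>a. eval3 p a y z = 0)"
    by blast
  have no_roots: "eval3 p a y z \<noteq> 0" if "y \<noteq> 0" for a y z
    using zeros[of y z] that by auto
  obtain a where "eval3 p a 0 0 = 0"
    using zeros[of 0 0] by auto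
  then have "eval3 p 0 0 1 = 0"
    using eval3_depends_only_on_y[OF no_roots] by metis
  then show False
    using zeros[of 0 1] by auto
qed

end
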